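(* Let $\mathbb{F}$ be a field of characteristic $2$, $V$ a finite-dimensional $\mathbb{F}$-vector space and $b$ a non-degenerate symmetric bilinear form on $V$. Let $\mathcal{V}$ be a linear subspace of $\mathcal{S}_b$ all of whose elements are nilpotent. Let $x \in V\setminus\{0\}$ with $b(x,x)=0$, let $u \in \mathcal{V}$ with $b(x,u(x))=0$, and let $y \in \{x\}^\perp \setminus \mathbb{F}x$ be such that $x \wedge_b y \in \mathcal{V}$. Then $b_a(u(x), y) = 0$.
   Context: $\mathcal{S}_b$ is the space of $b$-symmetric endomorphisms of $V$ (those $u$ for which $(z,w)\mapsto b(z,u(w))$ is symmetric). $\{x\}^\perp=\{z\in V: b(x,z)=0\}$. For $x,y\in V$, $x \wedge_b y$ is the endomorphism $z \mapsto b(y,z)\,x - b(x,z)\,y$. With $Q(z)=b(z,z)$ and $\sqrt{\cdot}$ the (unique) square root in an algebraic closure $\overline{\mathbb{F}}$ of $\mathbb{F}$, the a-transform of $b$ is $b_a(z,w) := b(z,w) + \sqrt{Q(z)Q(w)} \in \overline{\mathbb{F}}$. *)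

theory Defs
  imports Main "HOL-Algebra.Algebraic_Closure_Type"
begin

text \<open>Square root in the algebraic closure (unique in characteristic 2).\<close>
definition ac_sqrt :: "'a::field alg_closure \<Rightarrow> 'a alg_closure" where
  "ac_sqrt c = (THE s. s ^ 2 = c)"

definition qform :: "('v \<Rightarrow> 'v \<Rightarrow> 'a) \<Rightarrow> 'v \<Rightarrow> 'a" where
  "qform b z = b z z"

definition a_transform :: "('v \<Rightarrow> 'v \<Rightarrow> 'a::field) \<Rightarrow> 'v \<Rightarrow> 'v \<Rightarrow> 'a alg_closure" where
  "a_transform b z w = to_ac (b z w) + ac_sqrt (to_ac (qform b z * qform b w))"

definition bilinear_form :: "('a::field \<Rightarrow> 'v::ab_group_add \<Rightarrow> 'v) \<Rightarrow> ('v \<Rightarrow> 'v \<Rightarrow> 'a) \<Rightarrow> bool" where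
  "bilinear_form scale b \<longleftrightarrow>
     (\<forall>x. Vector_Spaces.linear scale (*) (b x)) \<and> (\<forall>y. Vector_Spaces.linear scale (*) (\<lambda>x. b x y))"

definition symmetric_form :: "('v \<Rightarrow> 'v \<Rightarrow> 'a) \<Rightarrow> bool" where
  "symmetric_form b \<longleftrightarrow> (\<forall>x y. b x y = b y x)"

definition nondegenerate_form :: "('v::zero \<Rightarrow> 'v \<Rightarrow> 'a::zero) \<Rightarrow> bool" where
  "nondegenerate_form b \<longleftrightarrow> (\<forall>x. (\<forall>z. b x z = 0) \<longrightarrow> x = 0)"

definition b_symmetric_endos :: "('a::field \<Rightarrow> 'v::ab_group_add \<Rightarrow> 'v) \<Rightarrow> ('v \<Rightarrow> 'v \<Rightarrow> 'a) \<Rightarrow> ('v \<Rightarrow> 'v) set" where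
  "b_symmetric_endos scale b =
     {u. Vector_Spaces.linear scale scale u \<and> (\<forall>z w. b z (u w) = b w (u z))}"

definition endo_subspace :: "('a \<Rightarrow> 'v::ab_group_add \<Rightarrow> 'v) \<Rightarrow> ('v \<Rightarrow> 'v) set \<Rightarrow> bool" where
  "endo_subspace scale W \<longleftrightarrow>
     (\<lambda>_. 0) \<in> W \<and> (\<forall>u\<in>W. \<forall>v\<in>W. (\<lambda>z. u z + v z) \<in> W) \<and>
     (\<forall>c. \<forall>u\<in>W. (\<lambda>z. scale c (u z)) \<in> W)"

definition nilpotent_endo :: "('v::zero \<Rightarrow> 'v) \<Rightarrow> bool" where
  "nilpotent_endo u \<longleftrightarrow> (\<exists>k. (u ^^ k) = (\<lambda>_. 0))"

definition wedge_b :: "('a \<Rightarrow> 'v::ab_group_add \<Rightarrow> 'v) \<Rightarrow> ('v \<Rightarrow> 'v \<Rightarrow> 'a) \<Rightarrow> 'v \<Rightarrow> 'v \<Rightarrow> ('v \<Rightarrow> 'v)" where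
  "wedge_b scale b x y = (\<lambda>z. scale (b y z) x - scale (b x z) y)"

end

theory Submission
  imports Defs "HOL-Computational_Algebra.Polynomial"
begin

(* In characteristic 2 square roots are unique, so b_a(z,w) = b(z,w) + sqrt(Q(z)Q(w)) vanishes
   as soon as b(z,w)^2 = Q(z)Q(w).  It therefore suffices to prove b(ux,y)^2 = Q(ux)Q(y), which
   holds over any field.

   For nilpotent f consider the resolvent G_f(p,q) = b(p, (1 - t f)^-1 q) in F[t].  Both u and
   v = u + x wedge_b y are nilpotent, and v - u has rank two, so the resolvent identity relates the
   Gram matrices P, P' of G_u, G_v on {x,y} by P - P' = -t P J P' with J = (0 1; -1 0).  Hence
   det(I - t P J) is a unit of F[t], i.e. equal to 1.  As P is symmetric, this determinant is
   1 + t^2 (G_u(x,x) G_u(y,y) - G_u(x,y)^2), and the t^2-coefficient of G_u(x,y)^2 = G_u(x,x) G_u(y,y)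
   is b(ux,y)^2 = Q(ux)Q(y) once b(x,x) = b(x,ux) = b(x,y) = 0. *)

lemma funpow_eq_zero_mono:
  fixes f :: "'a::zero \<Rightarrow> 'a"
  assumes "f 0 = 0" and "f ^^ k = (\<lambda>_. 0)" and "k \<le> n"
  shows "f ^^ n = (\<lambda>_. 0)"
proof -
  have "(f ^^ j) 0 = 0" for j
    by (induction j) (simp_all add: assms(1))
  moreover have "f ^^ n = f ^^ (n - k) \<circ> f ^^ k"
    using assms(3) by (simp flip: funpow_add)
  ultimately show ?thesis
    using assms(2) by auto
qed

lemma nilpotent_endo_funpow_eq_zero:
  fixes f :: "'a::zero \<Rightarrow> 'a"
  assumes "nilpotent_endo f" and "f 0 = 0"
  obtains k where "\<And>n. k \<le> n \<Longrightarrow> f ^^ n = (\<lambda>_. 0)"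
  using assms funpow_eq_zero_mono unfolding nilpotent_endo_def by metis

lemma funpow_add_diff_sum:
  assumes "module_hom s s u" and "v = (\<lambda>z. u z + w z)"
  shows "(v ^^ Suc m) z - (u ^^ Suc m) z = (\<Sum>i\<le>m. (u ^^ i) (w ((v ^^ (m - i)) z)))"
proof (induction m)
  case 0
  then show ?case
    using assms(2) by simp
next
  case (Suc m)
  have "(v ^^ Suc (Suc m)) z - (u ^^ Suc (Suc m)) z
      = u ((v ^^ Suc m) z - (u ^^ Suc m) z) + w ((v ^^ Suc m) z)"
    by (simp add: assms(2) module_hom.diff[OF assms(1)])
  also have "\<dots> = (\<Sum>i\<le>m. (u ^^ Suc i) (w ((v ^^ (m - i)) z))) + w ((v ^^ Suc m) z)"
    unfolding Suc.IH module_hom.sum[OF assms(1)] by simp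
  also have "\<dots> = (\<Sum>i\<le>Suc m. (u ^^ i) (w ((v ^^ (Suc m - i)) z)))"
    by (subst sum.atMost_Suc_shift) simp
  finally show ?case .
qed

lemma b_symmetric_funpow:
  assumes "\<And>z w. b z (u w) = b w (u z)" and "symmetric_form b"
  shows "b z ((u ^^ k) w) = b w ((u ^^ k) z)"
proof (induction k arbitrary: z w)
  case 0
  then show ?case
    using assms(2) by (simp add: symmetric_form_def)
next
  case (Suc k)
  have "b z ((u ^^ Suc k) w) = b ((u ^^ k) w) (u z)"
    using assms(1) by simp
  also have "\<dots> = b w ((u ^^ k) (u z))"
    using Suc assms(2) by (simp add: symmetric_form_def)
  finally show ?case
    by (simp add: funpow_swap1)
qed

lemma det2_mult_eq_one:
  fixes m11 m12 m21 m22 n11 n12 n21 n22 :: "'r::comm_ring_1"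
  assumes "m11 * n11 + m12 * n21 = 1" and "m11 * n12 + m12 * n22 = 0"
    and "m21 * n11 + m22 * n21 = 0" and "m21 * n12 + m22 * n22 = 1"
  shows "(m11 * m22 - m12 * m21) * (n11 * n22 - n12 * n21) = 1"
proof -
  have "(m11 * m22 - m12 * m21) * (n11 * n22 - n12 * n21)
      = (m11 * n11 + m12 * n21) * (m21 * n12 + m22 * n22)
        - (m11 * n12 + m12 * n22) * (m21 * n11 + m22 * n21)"
    by (simp add: algebra_simps)
  then show ?thesis
    using assms by simp
qed

(* With P = (a b; c d), P' = (a' b'; c' d') and J = (0 1; -1 0) the hypotheses read
   P - P' = -t P J P', and the conclusion is det (I - t P J) * det (I + t P' J) = 1. *)
lemma gram_pencil_det_mult_eq_one:
  fixes t a b c d a' b' c' d' :: "'r::comm_ring_1"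
  assumes "a - a' = - t * (a * c' - b * a')" and "b - b' = - t * (a * d' - b * b')"
    and "c - c' = - t * (c * c' - d * a')" and "d - d' = - t * (c * d' - d * b')"
  shows "((1 + t * b) * (1 - t * c) - (- t * a) * (t * d))
       * ((1 - t * b') * (1 + t * c') - (t * a') * (- t * d')) = 1"
proof (rule det2_mult_eq_one)
  have "(1 + t * b) * (1 - t * b') + (- t * a) * (- t * d') = 1 + t * ((b - b') + t * (a * d' - b * b'))"
    by (simp add: algebra_simps)
  then show "(1 + t * b) * (1 - t * b') + (- t * a) * (- t * d') = 1"
    using assms(2) by simp
  have "(1 + t * b) * (t * a') + (- t * a) * (1 + t * c') = - t * ((a - a') + t * (a * c' - b * a'))"
    by (simp add: algebra_simps)
  then show "(1 + t * b) * (t * a') + (- t * a) * (1 + t * c') = 0"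
    using assms(1) by simp
  have "(t * d) * (1 - t * b') + (1 - t * c) * (- t * d') = t * ((d - d') + t * (c * d' - d * b'))"
    by (simp add: algebra_simps)
  then show "(t * d) * (1 - t * b') + (1 - t * c) * (- t * d') = 0"
    using assms(4) by simp
  have "(t * d) * (t * a') + (1 - t * c) * (1 + t * c') = 1 - t * ((c - c') + t * (c * c' - d * a'))"
    by (simp add: algebra_simps)
  then show "(t * d) * (t * a') + (1 - t * c) * (1 + t * c') = 1"
    using assms(3) by simp
qed

lemma one_plus_X_mult_dvd_one_imp_zero:
  fixes r :: "'a::idom poly"
  assumes "(1 + [:0, 1:] * r) dvd 1"
  shows "r = 0"
proof (rule poly_eqI)
  fix n
  obtain k where "1 + [:0, 1:] * r = [:k:]"
    using assms by (auto simp: is_unit_poly_iff)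
  then have "coeff (1 + [:0, 1:] * r) (Suc n) = 0"
    by simp
  then show "coeff r n = coeff 0 n"
    by simp
qed

lemma module_hom_b_symmetric_endo: "u \<in> b_symmetric_endos scale b \<Longrightarrow> module_hom scale scale u"
  by (simp add: b_symmetric_endos_def module_hom_iff_linear)

(* b(p, (1 - t f)^-1 q) for nilpotent f; for other f the coefficient sequence may have infinite
   support and the value of Abs_poly is then unspecified. *)
definition resolvent_poly :: "('v \<Rightarrow> 'v \<Rightarrow> 'a::zero) \<Rightarrow> ('v \<Rightarrow> 'v) \<Rightarrow> 'v \<Rightarrow> 'v \<Rightarrow> 'a poly" where
  "resolvent_poly b f p q = Abs_poly (\<lambda>k. b p ((f ^^ k) q))"

context
  fixes scale :: "'a::field \<Rightarrow> 'v::ab_group_add \<Rightarrow> 'v" and b :: "'v \<Rightarrow> 'v \<Rightarrow> 'a"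
  assumes vs: "vector_space scale" and bil: "bilinear_form scale b"
begin

lemma module_hom_form_right: "module_hom scale (*) (b p)"
  using bil by (simp add: bilinear_form_def module_hom_iff_linear)

lemma module_hom_funpow:
  assumes "module_hom scale scale u"
  shows "module_hom scale scale (u ^^ k)"
proof (induction k)
  case 0
  then show ?case
    using vector_space.linear_id[OF vs] by (simp add: id_def module_hom_iff_linear)
next
  case (Suc k)
  then show ?case
    using Vector_Spaces.linear_compose[of scale scale "u ^^ k" scale u] assms
    by (simp add: comp_def module_hom_iff_linear)
qed

lemma coeff_resolvent_poly:
  assumes "nilpotent_endo f" and "f 0 = 0"
  shows "coeff (resolvent_poly b f p q) k = b p ((f ^^ k) q)"
proof -
  obtain K where K: "\<And>n. K \<le> n \<Longrightarrow> f ^^ n = (\<lambda>_. 0)"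
    using nilpotent_endo_funpow_eq_zero[OF assms] by blast
  have "coeff (Abs_poly (\<lambda>k. b p ((f ^^ k) q))) = (\<lambda>k. b p ((f ^^ k) q))"
    by (rule coeff_Abs_poly[of K]) (simp add: K module_hom.zero[OF module_hom_form_right])
  then show ?thesis
    by (simp add: resolvent_poly_def)
qed

lemma resolvent_poly_wedge_diff:
  assumes u: "module_hom scale scale u" and nil_u: "nilpotent_endo u" and nil_v: "nilpotent_endo v"
    and v: "v = (\<lambda>z. u z + wedge_b scale b x y z)"
  shows "resolvent_poly b u p q - resolvent_poly b v p q
       = - [:0, 1:] * (resolvent_poly b u p x * resolvent_poly b v y q
                       - resolvent_poly b u p y * resolvent_poly b v x q)"
proof (rule poly_eqI)
  fix n
  have "b p 0 = 0" for p
    using module_hom.zero[OF module_hom_form_right] .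
  moreover have "scale 0 z = 0" for z
    using vs module.scale_zero_left module_iff_vector_space by metis
  ultimately have "u 0 = 0" "v 0 = 0"
    using module_hom.zero[OF u] by (simp_all add: v wedge_b_def)
  then have coeff_u: "coeff (resolvent_poly b u p q) k = b p ((u ^^ k) q)"
    and coeff_v: "coeff (resolvent_poly b v p q) k = b p ((v ^^ k) q)" for p q k
    using coeff_resolvent_poly nil_u nil_v by blast+
  have bu_hom: "module_hom scale (*) (\<lambda>z. b p ((u ^^ i) z))" for p i
    using module_hom_compose[OF module_hom_funpow[OF u] module_hom_form_right]
    by (simp add: comp_def)
  show "coeff (resolvent_poly b u p q - resolvent_poly b v p q) n
      = coeff (- [:0, 1:] * (resolvent_poly b u p x * resolvent_poly b v y q
                             - resolvent_poly b u p y * resolvent_poly b v x q)) n"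
  proof (cases n)
    case 0
    then show ?thesis
      by (simp add: coeff_u coeff_v)
  next
    case (Suc m)
    have "coeff (resolvent_poly b u p q - resolvent_poly b v p q) n
        = - b p ((v ^^ Suc m) q - (u ^^ Suc m) q)"
      using Suc module_hom.diff[OF bu_hom[of p 0]] by (simp add: coeff_u coeff_v)
    also have "\<dots> = - (\<Sum>i\<le>m. b p ((u ^^ i) (wedge_b scale b x y ((v ^^ (m - i)) q))))"
      by (simp only: funpow_add_diff_sum[OF u v] module_hom.sum[OF module_hom_form_right])
    also have "\<dots> = - (\<Sum>i\<le>m. b p ((u ^^ i) x) * b y ((v ^^ (m - i)) q)
                             - b p ((u ^^ i) y) * b x ((v ^^ (m - i)) q))"
      by (simp add: wedge_b_def module_hom.diff[OF bu_hom] module_hom.scale[OF bu_hom] mult.commute)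
    also have "\<dots> = coeff (- [:0, 1:] * (resolvent_poly b u p x * resolvent_poly b v y q
                                          - resolvent_poly b u p y * resolvent_poly b v x q)) n"
      using Suc by (simp add: coeff_mult coeff_u coeff_v sum_subtractf)
    finally show ?thesis .
  qed
qed

lemma resolvent_poly_square_eq:
  assumes u: "u \<in> b_symmetric_endos scale b" and sym: "symmetric_form b"
    and nil_u: "nilpotent_endo u" and nil_v: "nilpotent_endo v"
    and v: "v = (\<lambda>z. u z + wedge_b scale b x y z)"
  shows "resolvent_poly b u x y ^ 2 = resolvent_poly b u x x * resolvent_poly b u y y"
proof -
  define T :: "'a poly" where "T = [:0, 1:]"
  define a c d where "a = resolvent_poly b u x x" and "c = resolvent_poly b u x y"
    and "d = resolvent_poly b u y y"
  note u_hom = module_hom_b_symmetric_endo[OF u]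
  have c_sym: "resolvent_poly b u y x = c"
  proof (rule poly_eqI)
    fix k
    have "u 0 = 0"
      using module_hom.zero[OF u_hom] .
    then show "coeff (resolvent_poly b u y x) k = coeff c k"
      using u b_symmetric_funpow[OF _ sym, of u]
      by (simp add: c_def coeff_resolvent_poly[OF nil_u] b_symmetric_endos_def)
  qed
  note diff = resolvent_poly_wedge_diff[OF u_hom nil_u nil_v v, folded T_def]
  have "((1 + T * c) * (1 - T * c) - (- T * a) * (T * d)) dvd 1"
    using gram_pencil_det_mult_eq_one[OF diff[of x x] diff[of x y] diff[of y x] diff[of y y],
        unfolded c_sym, folded a_def c_def d_def]
    by (metis dvdI)
  moreover have "(1 + T * c) * (1 - T * c) - (- T * a) * (T * d) = 1 + T * (T * (a * d - c ^ 2))"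
    by (simp add: algebra_simps power2_eq_square)
  ultimately have "a * d - c ^ 2 = 0"
    unfolding T_def by (metis one_plus_X_mult_dvd_one_imp_zero mult_eq_0_iff pCons_eq_0_iff one_neq_zero)
  then show ?thesis
    by (simp add: a_def c_def d_def)
qed

lemma nilpotent_wedge_square_eq_qform:
  assumes u: "u \<in> b_symmetric_endos scale b" and sym: "symmetric_form b"
    and nil_u: "nilpotent_endo u" and nil_v: "nilpotent_endo (\<lambda>z. u z + wedge_b scale b x y z)"
    and "b x x = 0" and "b x (u x) = 0" and "b x y = 0"
  shows "b (u x) y ^ 2 = qform b (u x) * qform b y"
proof -
  have u_sym: "b z (u w) = b w (u z)" for z w
    using u by (simp add: b_symmetric_endos_def)
  note coeff_u = coeff_resolvent_poly[OF nil_u module_hom.zero[OF module_hom_b_symmetric_endo[OF u]]]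
  have "coeff (resolvent_poly b u x y ^ 2) 2 = coeff (resolvent_poly b u x x * resolvent_poly b u y y) 2"
    using resolvent_poly_square_eq[OF u sym nil_u nil_v refl] by simp
  then have "b x (u y) ^ 2 = b x (u (u x)) * b y y"
    using assms(5-7) by (simp add: power2_eq_square coeff_mult numeral_2_eq_2 coeff_u)
  moreover have "b x (u y) = b (u x) y" and "b x (u (u x)) = b (u x) (u x)"
    using u_sym sym by (metis symmetric_form_def)+
  ultimately show ?thesis
    by (simp add: qform_def)
qed

end

lemma power2_eq_iff_CHAR_2:
  fixes s t :: "'a::idom"
  assumes "CHAR('a) = 2"
  shows "s ^ 2 = t ^ 2 \<longleftrightarrow> s = t"
proof -
  have "s ^ 2 - t ^ 2 = (s - t) * (s + t)"
    by (simp add: power2_eq_square algebra_simps)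
  also have "\<dots> = (s - t) ^ 2"
    using minus_CHAR_2[OF assms, of s t] by (simp add: power2_eq_square)
  finally show ?thesis
    by (metis eq_iff_diff_eq_0 power_eq_0_iff zero_neq_numeral)
qed

lemma ac_sqrt_power2:
  assumes "CHAR('a) = 2"
  shows "ac_sqrt (t ^ 2) = (t :: 'a::field alg_closure)"
  unfolding ac_sqrt_def using power2_eq_iff_CHAR_2[of _ t] assms by simp

lemma a_transform_eq_0_CHAR_2:
  assumes "CHAR('a) = 2" and "b z w ^ 2 = qform b z * qform b w"
  shows "a_transform b z w = (0 :: 'a::field alg_closure)"
proof -
  have "ac_sqrt (to_ac (qform b z * qform b w)) = to_ac (b z w)"
    using ac_sqrt_power2[OF assms(1)] by (simp flip: assms(2))
  then have "a_transform b z w = to_ac (b z w) + to_ac (b z w)"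
    by (simp add: a_transform_def)
  also have "\<dots> = 0"
    using minus_CHAR_2[of "to_ac (b z w)" "to_ac (b z w)"] assms(1) by simp
  finally show ?thesis .
qed

theorem lemma4p10:
  fixes scale :: "'a::field \<Rightarrow> 'v::ab_group_add \<Rightarrow> 'v"
    and b :: "'v \<Rightarrow> 'v \<Rightarrow> 'a"
    and VV :: "('v \<Rightarrow> 'v) set"
    and x y :: 'v and u :: "'v \<Rightarrow> 'v"
  assumes char2: "CHAR('a) = 2"
    and vs: "vector_space scale"
    and findim: "\<exists>B. finite B \<and> module.span scale B = UNIV"
    and bil: "bilinear_form scale b"
    and sym: "symmetric_form b"
    and nondeg: "nondegenerate_form b"
    and sub: "endo_subspace scale VV"
    and subS: "VV \<subseteq> b_symmetric_endos scale b"
    and nil: "\<forall>v\<in>VV. nilpotent_endo v"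
    and x_ne: "x \<noteq> 0"
    and x_iso: "b x x = 0"
    and u_in: "u \<in> VV"
    and bxux: "b x (u x) = 0"
    and y_perp: "b x y = 0"
    and y_notin: "y \<notin> range (\<lambda>c. scale c x)"
    and wedge_in: "wedge_b scale b x y \<in> VV"
  shows "a_transform b (u x) y = 0"
proof -
  have "(\<lambda>z. u z + wedge_b scale b x y z) \<in> VV"
    using sub u_in wedge_in by (simp add: endo_subspace_def)
  with nil u_in have nil_u: "nilpotent_endo u"
    and nil_v: "nilpotent_endo (\<lambda>z. u z + wedge_b scale b x y z)"
    by blast+
  have "u \<in> b_symmetric_endos scale b"
    using subS u_in by blast
  then have "b (u x) y ^ 2 = qform b (u x) * qform b y"
    by (rule nilpotent_wedge_square_eq_qform[OF vs bil _ sym nil_u nil_v x_iso bxux y_perp])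
  then show ?thesis
    by (rule a_transform_eq_0_CHAR_2[OF char2])
qed

end
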